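(* For $n \ge 2$, the path $P_n$ is $\gamma_{\rm tg}$-critical if and only if $n \pmod 6 \in \{2,4\}$.
   Context: Total domination game on a graph $G$ (without isolated vertices): Dominator and Staller alternately choose vertices; each chosen vertex must be adjacent to at least one vertex not yet totally dominated (i.e., not adjacent to any previously chosen vertex); the game ends when no legal move exists. Dominator minimizes, Staller maximizes the number of moves. $\gamma_{\rm tg}(G)$ is the number of moves when Dominator starts and both play optimally. $G|v$ is the graph with vertex $v$ declared already totally dominated (so moves must totally dominate some vertex not yet totally dominated and other than the declared one), and $\gamma_{\rm tg}(G|v)$ is the optimal number of moves of the Dominator-start game on it. $G$ is $\gamma_{\rm tg}$-critical if $\gamma_{\rm tg}(G|v) < \gamma_{\rm tg}(G)$ for every vertex $v$. *)

theory Defs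
  imports Main
begin

text \<open>A graph is given by a finite vertex set V and an adjacency relation E
  (for the paths below: symmetric, irreflexive, no isolated vertices).\<close>

definition nbh :: "'a set \<Rightarrow> ('a \<Rightarrow> 'a \<Rightarrow> bool) \<Rightarrow> 'a \<Rightarrow> 'a set" where
  "nbh V E v = {u \<in> V. E v u}"

text \<open>D = set of vertices already totally dominated (or declared so).
  A vertex v is a legal move if it totally dominates some vertex not in D.\<close>
definition legal :: "'a set \<Rightarrow> ('a \<Rightarrow> 'a \<Rightarrow> bool) \<Rightarrow> 'a set \<Rightarrow> 'a \<Rightarrow> bool" where
  "legal V E D v \<longleftrightarrow> v \<in> V \<and> \<not> nbh V E v \<subseteq> D"

text \<open>Optimal number of remaining moves, with fuel k (each legal move adds a new
  vertex of V to D, so fuel card V suffices); dmin = Dominator to move.\<close>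
fun gval :: "'a set \<Rightarrow> ('a \<Rightarrow> 'a \<Rightarrow> bool) \<Rightarrow> nat \<Rightarrow> bool \<Rightarrow> 'a set \<Rightarrow> nat" where
  "gval V E 0 dmin D = 0"
| "gval V E (Suc k) dmin D =
     (if {v. legal V E D v} = {} then 0
      else if dmin then Min ((\<lambda>v. 1 + gval V E k False (D \<union> nbh V E v)) ` {v. legal V E D v})
      else Max ((\<lambda>v. 1 + gval V E k True (D \<union> nbh V E v)) ` {v. legal V E D v}))"

definition gamma_tg :: "'a set \<Rightarrow> ('a \<Rightarrow> 'a \<Rightarrow> bool) \<Rightarrow> nat" where
  "gamma_tg V E = gval V E (card V) True {}"

text \<open>Game on G|v: vertex v declared already totally dominated.\<close>
definition gamma_tg_decl :: "'a set \<Rightarrow> ('a \<Rightarrow> 'a \<Rightarrow> bool) \<Rightarrow> 'a \<Rightarrow> nat" where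
  "gamma_tg_decl V E v = gval V E (card V) True {v}"

definition tg_critical :: "'a set \<Rightarrow> ('a \<Rightarrow> 'a \<Rightarrow> bool) \<Rightarrow> bool" where
  "tg_critical V E \<longleftrightarrow> (\<forall>v\<in>V. gamma_tg_decl V E v < gamma_tg V E)"

definition path_V :: "nat \<Rightarrow> nat set" where
  "path_V n = {0..<n}"

definition path_E :: "nat \<Rightarrow> nat \<Rightarrow> bool" where
  "path_E i j \<longleftrightarrow> i + 1 = j \<or> j + 1 = i"

end

theory Submission
  imports Defs
begin

text \<open>A vertex of a path totally dominates exactly its neighbours, which have the other parity, so
  the game splits into two independent games, one on the even and one on the odd vertices; in
  each of them a move covers two consecutive vertices of the class, or a single end vertex where
  the path allows it. Give every maximal run of m consecutive, not yet totally dominated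
  vertices of a class the weight floor((4m + 2) / 3), except that an untouched class none of
  whose end vertices can be covered alone weighs 2 floor((2m + 1) / 3), and let the potential be
  the total weight. Every move lowers the potential by 1, 2 or 3, and in every unfinished
  position some move lowers it by 3 and some move lowers it by 1, unless the potential is even,
  when a move lowering it by 2 serves either purpose. Hence a position of potential p lasts
  floor(p / 2) more moves with Dominator to move and ceiling(p / 2) with Staller to move, and
  the criterion follows by computing the potential of the empty position and of the positions
  with one declared vertex.\<close>

section \<open>Game length from a potential\<close>

definition pot_value :: "bool \<Rightarrow> nat \<Rightarrow> nat" where
  "pot_value dmin p = (if dmin then p div 2 else (p + 1) div 2)"

definition optimal_drop :: "bool \<Rightarrow> nat \<Rightarrow> nat \<Rightarrow> bool" where
  "optimal_drop dmin a b \<longleftrightarrow> a = b + (if dmin then 3 else 1) \<or> (a = b + 2 \<and> even a)"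

lemma pot_value_move_bounds:
  assumes "b < a" "a \<le> b + 3"
  shows "pot_value True a \<le> 1 + pot_value False b"
    and "1 + pot_value True b \<le> pot_value False a"
  using assms unfolding pot_value_def by simp_all

lemma optimal_drop_pot_value:
  "optimal_drop dmin a b \<Longrightarrow> pot_value dmin a = 1 + pot_value (\<not> dmin) b"
  unfolding optimal_drop_def pot_value_def by (cases dmin) presburger+

lemma optimal_drop_add:
  assumes "optimal_drop dmin a b" "odd a \<or> even (a + c)"
  shows "optimal_drop dmin (a + c) (b + c)"
  using assms unfolding optimal_drop_def by auto

lemma card_undominated_decreases:
  assumes "finite V" "legal V E D v"
  shows "card (V - (D \<union> nbh V E v)) < card (V - D)"
proof -
  obtain u where "u \<in> nbh V E v" "u \<notin> D" using assms(2) by (auto simp: legal_def)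
  moreover have "nbh V E v \<subseteq> V" by (auto simp: nbh_def)
  ultimately have "V - (D \<union> nbh V E v) \<subset> V - D" by auto
  then show ?thesis using assms(1) by (simp add: psubset_card_mono)
qed

lemma minimax_pot_value:
  assumes "finite M" "M \<noteq> {}"
    and bounds: "\<And>v. v \<in> M \<Longrightarrow> b v < a \<and> a \<le> b v + 3"
    and optimal: "\<exists>v\<in>M. optimal_drop dmin a (b v)"
  shows "(if dmin then Min else Max) ((\<lambda>v. 1 + pot_value (\<not> dmin) (b v)) ` M) = pot_value dmin a"
proof -
  let ?f = "\<lambda>v. 1 + pot_value (\<not> dmin) (b v)"
  have attained: "pot_value dmin a \<in> ?f ` M"
    using optimal optimal_drop_pot_value by force
  show ?thesis
  proof (cases dmin)
    case True
    have "pot_value dmin a \<le> ?f v" if "v \<in> M" for v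
      using True bounds[OF that] pot_value_move_bounds(1) by auto
    then have "Min (?f ` M) = pot_value dmin a" using assms(1) attained by (intro Min_eqI) auto
    then show ?thesis using True by simp
  next
    case False
    have "?f v \<le> pot_value dmin a" if "v \<in> M" for v
      using False bounds[OF that] pot_value_move_bounds(2) by auto
    then have "Max (?f ` M) = pot_value dmin a" using assms(1) attained by (intro Max_eqI) auto
    then show ?thesis using False by simp
  qed
qed

lemma gval_eq_pot_value:
  fixes P :: "'a set \<Rightarrow> nat"
  assumes "finite V"
    and move_bounds: "\<And>D v. legal V E D v \<Longrightarrow>
      P (D \<union> nbh V E v) < P D \<and> P D \<le> P (D \<union> nbh V E v) + 3"
    and optimal_move: "\<And>D dmin. P D \<noteq> 0 \<Longrightarrow>
      \<exists>v. legal V E D v \<and> optimal_drop dmin (P D) (P (D \<union> nbh V E v))"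
  shows "card (V - D) \<le> k \<Longrightarrow> gval V E k dmin D = pot_value dmin (P D)"
proof (induction k arbitrary: dmin D)
  case 0
  then have "V \<subseteq> D" using \<open>finite V\<close> by auto
  then have "\<not> legal V E D v" for v by (auto simp: legal_def nbh_def)
  then have "P D = 0" using optimal_move by blast
  then show ?case by (simp add: pot_value_def)
next
  case (Suc k)
  define M where "M = {v. legal V E D v}"
  show ?case
  proof (cases "M = {}")
    case True
    then have "P D = 0" using optimal_move unfolding M_def by blast
    then show ?thesis using True by (simp add: M_def pot_value_def)
  next
    case False
    have "finite M" unfolding M_def legal_def using \<open>finite V\<close> by simp
    have IH: "gval V E k (\<not> dmin) (D \<union> nbh V E v) = pot_value (\<not> dmin) (P (D \<union> nbh V E v))"
      if "v \<in> M" for v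
      using Suc card_undominated_decreases[OF \<open>finite V\<close>] that unfolding M_def
      by (metis less_Suc_eq_le order_less_le_trans mem_Collect_eq)
    have "P D \<noteq> 0" using False move_bounds unfolding M_def by fastforce
    have "gval V E (Suc k) dmin D
        = (if dmin then Min else Max) ((\<lambda>v. 1 + gval V E k (\<not> dmin) (D \<union> nbh V E v)) ` M)"
      using False unfolding M_def by (cases dmin) auto
    also have "\<dots> = (if dmin then Min else Max) ((\<lambda>v. 1 + pot_value (\<not> dmin) (P (D \<union> nbh V E v))) ` M)"
      using IH by (simp cong: image_cong)
    also have "\<dots> = pot_value dmin (P D)"
      using \<open>finite M\<close> False move_bounds optimal_move[OF \<open>P D \<noteq> 0\<close>] unfolding M_def
      by (intro minimax_pot_value) auto
    finally show ?thesis .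
  qed
qed

section \<open>Potential of a parity class\<close>

definition run_pot :: "nat \<Rightarrow> nat" where
  "run_pot m = (4 * m + 2) div 3"

definition closed_run_pot :: "nat \<Rightarrow> nat" where
  "closed_run_pot m = 2 * ((2 * m + 1) div 3)"

text \<open>A word lists the vertices of one parity class in order, True marking a vertex that is not
  yet totally dominated. In word_pot k w, k is the length of the run of True's already read.\<close>

fun word_pot :: "nat \<Rightarrow> bool list \<Rightarrow> nat" where
  "word_pot k [] = run_pot k"
| "word_pot k (True # w) = word_pot (Suc k) w"
| "word_pot k (False # w) = run_pot k + word_pot 0 w"

abbreviation ends_False :: "bool list \<Rightarrow> bool" where
  "ends_False xs \<equiv> xs = [] \<or> last xs = False"

abbreviation starts_False :: "bool list \<Rightarrow> bool" where
  "starts_False ys \<equiv> ys = [] \<or> hd ys = False"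

lemma run_pot_bounds: "4 * m \<le> 3 * run_pot m" "3 * run_pot m \<le> 4 * m + 2"
  unfolding run_pot_def by linarith+

lemma run_pot_0 [simp]: "run_pot 0 = 0"
  by (simp add: run_pot_def)

lemma run_pot_eq_0_iff: "run_pot m = 0 \<longleftrightarrow> m = 0"
  using run_pot_bounds(1)[of m] by auto

lemma run_pot_mod3:
  "run_pot (3 * q) = 4 * q" "run_pot (3 * q + 1) = 4 * q + 2" "run_pot (3 * q + 2) = 4 * q + 3"
  unfolding run_pot_def by simp_all

lemma closed_run_pot_mod3:
  "closed_run_pot (3 * q) = 4 * q" "closed_run_pot (3 * q + 1) = 4 * q + 2"
  "closed_run_pot (3 * q + 2) = 4 * q + 2"
  unfolding closed_run_pot_def by presburger+

lemma nat_mod3_cases: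
  fixes m :: nat
  obtains q where "m = 3 * q" | q where "m = 3 * q + 1" | q where "m = 3 * q + 2"
proof -
  have m: "m = 3 * (m div 3) + m mod 3" by simp
  consider "m mod 3 = 0" | "m mod 3 = 1" | "m mod 3 = 2" by linarith
  then show ?thesis
  proof cases
    case 1 then show ?thesis using that(1)[of "m div 3"] m by simp
  next
    case 2 then show ?thesis using that(2)[of "m div 3"] m by simp
  next
    case 3 then show ?thesis using that(3)[of "m div 3"] m by simp
  qed
qed

lemma run_pot_Suc: "run_pot m < run_pot (Suc m) \<and> run_pot (Suc m) \<le> run_pot m + 3"
  using run_pot_bounds[of m] run_pot_bounds[of "Suc m"] by (simp only: mult_Suc_right) linarith

lemma run_pot_merge:
  "run_pot i + run_pot j < run_pot (i + 2 + j) \<and> run_pot (i + 2 + j) \<le> run_pot i + run_pot j + 3"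
  using run_pot_bounds[of i] run_pot_bounds[of j] run_pot_bounds[of "i + 2 + j"]
  by (simp only: distrib_left) linarith

lemma closed_run_pot_merge:
  "run_pot i + run_pot j < closed_run_pot (i + 2 + j)
   \<and> closed_run_pot (i + 2 + j) \<le> run_pot i + run_pot j + 3"
proof -
  have "4 * m \<le> 3 * closed_run_pot m + 2" "3 * closed_run_pot m \<le> 4 * m + 2" for m
    unfolding closed_run_pot_def by linarith+
  from this[of "i + 2 + j"] show ?thesis
    using run_pot_bounds[of i] run_pot_bounds[of j] by (simp only: distrib_left) linarith
qed

lemma word_pot_replicate: "word_pot k (replicate m True @ ys) = word_pot (k + m) ys"
  by (induction m arbitrary: k) auto

lemma word_pot_replicate_True [simp]: "word_pot k (replicate m True) = run_pot (k + m)"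
  using word_pot_replicate[of k m "[]"] by simp

lemma word_pot_append_False: "word_pot k (xs @ False # ys) = word_pot k xs + word_pot 0 ys"
proof (induction xs arbitrary: k)
  case (Cons a xs)
  then show ?case by (cases a) auto
qed simp

lemma word_pot_eq_0_iff: "word_pot k w = 0 \<longleftrightarrow> k = 0 \<and> (\<forall>x\<in>set w. \<not> x)"
  by (induction k w rule: word_pot.induct) (auto simp: run_pot_eq_0_iff)

lemma split_leading_True: "\<exists>t ys0. ys = replicate t True @ ys0 \<and> starts_False ys0"
proof (induction ys)
  case (Cons a ys)
  then obtain t ys0 where "ys = replicate t True @ ys0" "starts_False ys0" by blast
  then show ?case
  proof (cases a)
    case True
    with \<open>ys = replicate t True @ ys0\<close> \<open>starts_False ys0\<close> show ?thesis
      by (intro exI[of _ "Suc t"] exI[of _ ys0]) auto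
  qed (intro exI[of _ 0] exI[of _ "a # ys"], simp)
qed simp

lemma split_trailing_True: "\<exists>xs0 r. xs = xs0 @ replicate r True \<and> ends_False xs0"
proof (induction xs rule: rev_induct)
  case (snoc a xs)
  then obtain xs0 r where "xs = xs0 @ replicate r True" "ends_False xs0" by blast
  then show ?case
  proof (cases a)
    case True
    with \<open>xs = xs0 @ replicate r True\<close> \<open>ends_False xs0\<close> show ?thesis
      by (intro exI[of _ xs0] exI[of _ "Suc r"]) (simp add: replicate_append_same)
  qed (intro exI[of _ "xs @ [a]"] exI[of _ 0], simp)
qed simp

lemma word_pot_run:
  assumes "ends_False xs" "starts_False ys"
  shows "word_pot 0 (xs @ replicate m True @ ys) = word_pot 0 xs + run_pot m + word_pot 0 ys"
proof -
  have right: "word_pot 0 (replicate m True @ ys) = run_pot m + word_pot 0 ys"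
    using assms(2) by (cases ys) (auto simp: word_pot_replicate)
  show ?thesis
  proof (cases "xs = []")
    case False
    with assms(1) obtain xs0 where "xs = xs0 @ [False]" by (metis append_butlast_last_id)
    then show ?thesis
      using right word_pot_append_False[of 0 xs0] word_pot_append_False[of 0 xs0 "[]"] by simp
  qed (use right in simp)
qed

lemma word_pot_cover_pair:
  assumes "a \<or> b"
  shows "word_pot 0 (xs @ False # False # ys) < word_pot 0 (xs @ a # b # ys)
    \<and> word_pot 0 (xs @ a # b # ys) \<le> word_pot 0 (xs @ False # False # ys) + 3"
proof -
  obtain xs0 r where xs: "xs = xs0 @ replicate r True" "ends_False xs0"
    using split_trailing_True by blast
  obtain t ys0 where ys: "ys = replicate t True @ ys0" "starts_False ys0"
    using split_leading_True by blast
  have run: "word_pot 0 (xs0 @ replicate m True @ ys0) = word_pot 0 xs0 + run_pot m + word_pot 0 ys0"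
    for m using word_pot_run xs(2) ys(2) by blast
  have left: "word_pot 0 (xs0 @ replicate m True) = word_pot 0 xs0 + run_pot m" for m
    using word_pot_run[of xs0 "[]" m] xs(2) by simp
  have right: "word_pot 0 (replicate m True @ ys0) = run_pot m + word_pot 0 ys0" for m
    using word_pot_run[of "[]" ys0 m] ys(2) by simp
  have covered: "word_pot 0 (xs @ False # False # ys)
      = word_pot 0 xs0 + run_pot r + run_pot t + word_pot 0 ys0"
    using word_pot_append_False[of 0 "xs0 @ replicate r True" "False # replicate t True @ ys0"]
      left right by (simp add: xs ys)
  consider "a" "b" | "a" "\<not> b" | "\<not> a" "b" using assms by blast
  then show ?thesis
  proof cases
    case 1
    then have "xs @ a # b # ys = xs0 @ replicate (r + 2 + t) True @ ys0"
      unfolding xs ys by (simp only: replicate_add append_assoc) (simp add: numeral_2_eq_2)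
    then show ?thesis using run[of "r + 2 + t"] covered run_pot_merge[of r t] by (simp only:) linarith
  next
    case 2
    then have "xs @ a # b # ys = (xs0 @ replicate (Suc r) True) @ False # (replicate t True @ ys0)"
      by (simp add: xs ys flip: replicate_append_same)
    then have "word_pot 0 (xs @ a # b # ys)
        = word_pot 0 (xs0 @ replicate (Suc r) True) + word_pot 0 (replicate t True @ ys0)"
      by (simp only: word_pot_append_False)
    then show ?thesis using covered left[of "Suc r"] right[of t] run_pot_Suc[of r] by linarith
  next
    case 3
    then have "xs @ a # b # ys = (xs0 @ replicate r True) @ False # (replicate (Suc t) True @ ys0)"
      by (simp add: xs ys)
    then have "word_pot 0 (xs @ a # b # ys)
        = word_pot 0 (xs0 @ replicate r True) + word_pot 0 (replicate (Suc t) True @ ys0)"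
      by (simp only: word_pot_append_False)
    then show ?thesis using covered left[of r] right[of "Suc t"] run_pot_Suc[of t] by linarith
  qed
qed

definition cover :: "nat \<Rightarrow> bool list \<Rightarrow> bool list" where
  "cover g w = (if g = 0 then w else w[g - 1 := False])[g := False]"

definition hits :: "nat \<Rightarrow> bool list \<Rightarrow> bool" where
  "hits g w \<longleftrightarrow> (0 < g \<and> g - 1 < length w \<and> w ! (g - 1)) \<or> (g < length w \<and> w ! g)"

lemma length_cover [simp]: "length (cover g w) = length w"
  by (simp add: cover_def)

lemma nth_cover:
  "i < length w \<Longrightarrow> cover g w ! i = (if i = g \<or> (0 < g \<and> i = g - 1) then False else w ! i)"
  by (auto simp: cover_def nth_list_update)

lemma cover_Suc_length: "cover (Suc (length xs)) (xs @ a # b # ys) = xs @ False # False # ys"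
  by (simp add: cover_def list_update_append)

lemma cover_Suc_length_last: "cover (Suc (length xs)) (xs @ [a]) = xs @ [False]"
  by (simp add: cover_def list_update_append)

lemma cover_length:
  assumes "ends_False xs"
  shows "cover (length xs) (xs @ a # ys) = xs @ False # ys"
proof (cases "xs = []")
  case False
  with assms obtain xs0 where "xs = xs0 @ [False]" by (metis append_butlast_last_id)
  then show ?thesis by (simp add: cover_def list_update_append)
qed (simp add: cover_def)

lemma cover_replicate:
  assumes "1 \<le> g" "g < L"
  shows "cover g (replicate L True) = replicate (g - 1) True @ False # False # replicate (L - 1 - g) True"
proof -
  have "replicate L True = replicate (g - 1) True @ True # True # replicate (L - 1 - g) True"
    using assms by (simp add: replicate_add[symmetric] flip: replicate_Suc)
  then show ?thesis
    using cover_Suc_length[of "replicate (g - 1) True" True True] assms by simp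
qed

lemma hits_cover_not_all_True:
  assumes "hits g w"
  shows "\<not> (\<forall>x\<in>set (cover g w). x)"
proof (cases "g < length w")
  case True
  then have "cover g w ! g = False" by (cases "g = 0") (auto simp: cover_def)
  then show ?thesis using True by (metis length_cover nth_mem)
next
  case False
  then have "0 < g" "g - 1 < length w" using assms by (auto simp: hits_def)
  then have "cover g w ! (g - 1) = False" using False by (simp add: cover_def)
  then show ?thesis using \<open>g - 1 < length w\<close> by (metis length_cover nth_mem)
qed

lemma word_pot_cover_bounds:
  assumes "hits g w" "g \<le> length w"
  shows "word_pot 0 (cover g w) < word_pot 0 w \<and> word_pot 0 w \<le> word_pot 0 (cover g w) + 3"
proof -
  consider "g = 0" | "0 < g" "g = length w" | "0 < g" "g < length w" using assms by linarith
  then show ?thesis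
  proof cases
    case 1
    then obtain b ys where w: "w = b # ys" "b" using assms by (cases w) (auto simp: hits_def)
    then show ?thesis
      using word_pot_cover_pair[of False b "[]" ys] 1 by (simp add: cover_def)
  next
    case 2
    then obtain xs a where w: "w = xs @ [a]" by (metis append_butlast_last_id length_greater_0_conv)
    then have "a" and g: "g = Suc (length xs)" using assms 2 by (auto simp: hits_def nth_append)
    have "word_pot 0 (xs @ c # [False]) = word_pot 0 (xs @ [c])" for c
      using word_pot_append_False[of 0 "xs @ [c]" "[]"] by simp
    then show ?thesis
      using word_pot_cover_pair[of a False xs "[]"] \<open>a\<close> w g by (simp add: cover_Suc_length_last)
  next
    case 3
    define xs where "xs = take (g - 1) w"
    have w: "w = xs @ w ! (g - 1) # w ! g # drop (Suc g) w"
      using 3 unfolding xs_def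
      by (metis Cons_nth_drop_Suc Suc_pred' append_take_drop_id less_imp_diff_less)
    have "cover g w = xs @ False # False # drop (Suc g) w"
      using cover_Suc_length[of xs "w ! (g - 1)" "w ! g" "drop (Suc g) w"] w 3
      by (simp add: xs_def)
    moreover have "w ! (g - 1) \<or> w ! g" using assms 3 by (auto simp: hits_def)
    ultimately show ?thesis using word_pot_cover_pair w by metis
  qed
qed

lemma word_pot_cover_replicate:
  assumes "1 \<le> g" "g < L"
  shows "word_pot 0 (cover g (replicate L True)) = run_pot (g - 1) + run_pot (L - 1 - g)"
  unfolding cover_replicate[OF assms]
  using word_pot_append_False[of 0 "replicate (g - 1) True" "False # replicate (L - 1 - g) True"]
  by simp

text \<open>The moves on a class are the gaps lo..hi of its word. If lo = 1 and hi + 1 = length w,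
  no move covers an end position alone, which matters only while the whole class is untouched.\<close>

definition seg_pot :: "nat \<Rightarrow> nat \<Rightarrow> bool list \<Rightarrow> nat" where
  "seg_pot lo hi w =
    (if lo = 1 \<and> hi + 1 = length w \<and> (\<forall>x\<in>set w. x) then closed_run_pot (length w)
     else word_pot 0 w)"

lemma seg_pot_cover:
  "hits g w \<Longrightarrow> seg_pot lo hi (cover g w) = word_pot 0 (cover g w)"
  using hits_cover_not_all_True by (auto simp: seg_pot_def)

lemma seg_pot_cover_bounds:
  assumes "lo \<le> g" "g \<le> hi" "hits g w" "lo \<le> 1" "hi \<le> length w"
  shows "seg_pot lo hi (cover g w) < seg_pot lo hi w \<and> seg_pot lo hi w \<le> seg_pot lo hi (cover g w) + 3"
proof (cases "lo = 1 \<and> hi + 1 = length w \<and> (\<forall>x\<in>set w. x)")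
  case True
  define L where "L = length w"
  have w: "w = replicate L True" using True replicate_length_same[of w True] by (auto simp: L_def)
  have g: "1 \<le> g" "g < L" using True assms by (auto simp: L_def)
  have "word_pot 0 (cover g w) = run_pot (g - 1) + run_pot (L - 1 - g)"
    unfolding w by (rule word_pot_cover_replicate[OF g])
  moreover have "(g - 1) + 2 + (L - 1 - g) = L" using g by simp
  moreover have "seg_pot lo hi w = closed_run_pot L"
    unfolding seg_pot_def L_def by (rule if_P[OF True])
  ultimately show ?thesis
    using closed_run_pot_merge[of "g - 1" "L - 1 - g"] seg_pot_cover[OF assms(3)] by simp
next
  case False
  then have "seg_pot lo hi w = word_pot 0 w" unfolding seg_pot_def by (rule if_not_P)
  then show ?thesis
    using seg_pot_cover[OF assms(3)] word_pot_cover_bounds[OF assms(3)] assms by simp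
qed

lemma seg_pot_eq_0_iff: "seg_pot lo hi w = 0 \<longleftrightarrow> (\<forall>x\<in>set w. \<not> x)"
  by (cases w) (auto simp: seg_pot_def closed_run_pot_def word_pot_eq_0_iff)

lemma run_pot_odd_iff: "odd (run_pot m) \<longleftrightarrow> m mod 3 = 2"
  by (cases m rule: nat_mod3_cases) (simp_all only: run_pot_mod3, presburger+)

lemma closed_run_optimal_gap:
  assumes "2 \<le> L"
  obtains g where "1 \<le> g" "g < L" "closed_run_pot L = run_pot (g - 1) + run_pot (L - 1 - g) + 2"
proof (cases L rule: nat_mod3_cases)
  case (1 q)
  then obtain p where p: "q = Suc p" "L - 1 - 1 = 3 * p + 1" using assms by (cases q) auto
  have "closed_run_pot L = 4 * p + 4" using closed_run_pot_mod3(1)[of q] 1 p(1) by simp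
  moreover have "run_pot (L - 1 - 1) = 4 * p + 2" using run_pot_mod3(2)[of p] p(2) by simp
  ultimately show ?thesis using that[of 1] assms by simp
next
  case (2 q)
  then obtain p where p: "q = Suc p" "L - 1 - 2 = 3 * p + 1" using assms by (cases q) auto
  have "closed_run_pot L = 4 * p + 6" using closed_run_pot_mod3(2)[of q] 2 p(1) by simp
  moreover have "run_pot (L - 1 - 2) = 4 * p + 2" using run_pot_mod3(2)[of p] p(2) by simp
  moreover have "run_pot 1 = 2" by (simp add: run_pot_def)
  ultimately show ?thesis using that[of 2] 2 p(1) by simp
next
  case (3 q)
  have "closed_run_pot L = 4 * q + 2" using closed_run_pot_mod3(3)[of q] 3 by simp
  moreover have "run_pot (L - 1 - 1) = 4 * q" using run_pot_mod3(1)[of q] 3 by simp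
  ultimately show ?thesis using that[of 1] 3 by simp
qed

lemma run_pot_optimal_shrink:
  assumes "1 \<le> m" "m mod 3 = 2 \<or> even (c + run_pot m)"
  shows "optimal_drop dmin (c + run_pot m) (c + run_pot (m - 1))
    \<or> 2 \<le> m \<and> optimal_drop dmin (c + run_pot m) (c + run_pot (m - 2))"
proof (cases m rule: nat_mod3_cases)
  case (1 q)
  then obtain p where p: "q = Suc p" "m - 2 = 3 * p + 1" using assms(1) by (cases q) auto
  have "run_pot m = 4 * p + 4" using run_pot_mod3(1)[of q] 1 p(1) by simp
  moreover have "run_pot (m - 2) = 4 * p + 2" using run_pot_mod3(2)[of p] p(2) by simp
  ultimately show ?thesis using 1 p assms(2) by (simp add: optimal_drop_def)
next
  case (2 q)
  have "run_pot m = 4 * q + 2" using run_pot_mod3(2)[of q] 2 by simp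
  moreover have "run_pot (m - 1) = 4 * q" using run_pot_mod3(1)[of q] 2 by simp
  ultimately show ?thesis using 2 assms(2) by (simp add: optimal_drop_def)
next
  case (3 q)
  have "run_pot m = 4 * q + 3" using run_pot_mod3(3)[of q] 3 by simp
  moreover have "run_pot (m - 1) = 4 * q + 2" using run_pot_mod3(2)[of q] 3 by simp
  moreover have "run_pot (m - 2) = 4 * q" using run_pot_mod3(1)[of q] 3 by simp
  ultimately show ?thesis using 3 by (cases dmin) (simp_all add: optimal_drop_def)
qed

lemma maximal_run_exists:
  "\<exists>x\<in>set w. x \<Longrightarrow>
    \<exists>xs m ys. w = xs @ replicate m True @ ys \<and> 1 \<le> m \<and> ends_False xs \<and> starts_False ys"
proof (induction w)
  case (Cons a w)
  show ?case
  proof (cases a)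
    case True
    obtain t ys where "w = replicate t True @ ys" "starts_False ys"
      using split_leading_True by blast
    with True show ?thesis by (intro exI[of _ "[]"] exI[of _ "Suc t"] exI[of _ ys]) auto
  next
    case False
    with Cons.prems have "\<exists>x\<in>set w. x" by simp
    with Cons.IH obtain xs m ys where "w = xs @ replicate m True @ ys" "1 \<le> m"
      "ends_False xs" "starts_False ys" by blast
    with False show ?thesis by (intro exI[of _ "a # xs"] exI[of _ m] exI[of _ ys]) auto
  qed
qed simp

lemma odd_word_pot_run_mod3_aux:
  "odd (word_pot k w) \<Longrightarrow> \<exists>xs m ys. replicate k True @ w = xs @ replicate m True @ ys
    \<and> m mod 3 = 2 \<and> ends_False xs \<and> starts_False ys"
proof (induction k w rule: word_pot.induct)
  case (1 k)
  then show ?case using run_pot_odd_iff by (intro exI[of _ "[]"] exI[of _ k] exI[of _ "[]"]) simp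
next
  case (2 k w)
  then show ?case by (simp add: replicate_app_Cons_same)
next
  case (3 k w)
  show ?case
  proof (cases "k mod 3 = 2")
    case True
    then show ?thesis by (intro exI[of _ "[]"] exI[of _ k] exI[of _ "False # w"]) simp
  next
    case False
    then have "odd (word_pot 0 w)" using "3.prems" run_pot_odd_iff by auto
    then obtain xs m ys where "w = xs @ replicate m True @ ys" "m mod 3 = 2"
      "ends_False xs" "starts_False ys"
      using "3.IH" by auto
    then show ?thesis
      by (intro exI[of _ "replicate k True @ False # xs"] exI[of _ m] exI[of _ ys]) auto
  qed
qed

lemma odd_word_pot_run_mod3:
  assumes "odd (word_pot 0 w)"
  obtains xs m ys where "w = xs @ replicate m True @ ys" "m mod 3 = 2" "ends_False xs" "starts_False ys"
  using odd_word_pot_run_mod3_aux[OF assms] that by auto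

lemma run_cover_shrink_two:
  assumes "w = xs @ replicate m True @ ys" "2 \<le> m" "starts_False ys"
  shows "hits (Suc (length xs)) w \<and> Suc (length xs) < length w
    \<and> word_pot 0 (cover (Suc (length xs)) w) = word_pot 0 xs + run_pot (m - 2) + word_pot 0 ys"
proof -
  have w: "w = xs @ True # True # (replicate (m - 2) True @ ys)"
    using assms by (simp flip: replicate_Suc)
  then have "cover (Suc (length xs)) w = xs @ False # False # (replicate (m - 2) True @ ys)"
    using cover_Suc_length by metis
  then show ?thesis
    using w word_pot_append_False[of 0 xs] word_pot_run[of "[]" ys "m - 2"] assms(3)
    by (simp add: hits_def nth_append)
qed

lemma run_cover_left_end:
  assumes "w = xs @ replicate m True @ ys" "1 \<le> m" "ends_False xs" "starts_False ys"
  shows "hits (length xs) w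
    \<and> word_pot 0 (cover (length xs) w) = word_pot 0 xs + run_pot (m - 1) + word_pot 0 ys"
proof -
  have w: "w = xs @ True # (replicate (m - 1) True @ ys)"
    using assms by (simp flip: replicate_Suc)
  then have "cover (length xs) w = xs @ False # (replicate (m - 1) True @ ys)"
    using cover_length[OF assms(3)] by metis
  then show ?thesis
    using w assms(4) word_pot_append_False[of 0 xs] word_pot_run[of "[]" ys "m - 1"]
    by (simp add: hits_def nth_append)
qed

lemma leading_run_cover_right_end:
  assumes "w = replicate m True @ ys" "1 \<le> m" "starts_False ys"
  shows "hits m w \<and> word_pot 0 (cover m w) = run_pot (m - 1) + word_pot 0 ys"
proof -
  have w: "w = replicate (m - 1) True @ True # ys"
    using assms by (simp add: replicate_append_same flip: replicate_Suc)
  show ?thesis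
  proof (cases ys)
    case Nil
    then have "cover m w = replicate (m - 1) True @ [False]"
      using cover_Suc_length_last[of "replicate (m - 1) True" True] w assms(2) by simp
    then show ?thesis
      using w Nil assms(2) word_pot_append_False[of 0 "replicate (m - 1) True" "[]"]
      by (auto simp: hits_def nth_append)
  next
    case (Cons y ys')
    then have "cover m w = replicate (m - 1) True @ False # False # ys'"
      using cover_Suc_length[of "replicate (m - 1) True" True y ys'] w assms(2) by simp
    then show ?thesis
      using w Cons assms(2,3) word_pot_append_False[of 0 "replicate (m - 1) True" "False # ys'"]
      by (auto simp: hits_def nth_append)
  qed
qed

lemma run_cover_shrink_one:
  assumes w: "w = xs @ replicate m True @ ys" "1 \<le> m" "ends_False xs" "starts_False ys"
    and gaps: "lo \<le> 1" "length w \<le> hi + 1"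
    and not_closed: "\<not> (lo = 1 \<and> hi + 1 = length w \<and> (\<forall>x\<in>set w. x))"
  shows "\<exists>g. lo \<le> g \<and> g \<le> hi \<and> hits g w
    \<and> word_pot 0 (cover g w) = word_pot 0 xs + run_pot (m - 1) + word_pot 0 ys"
proof (cases "lo \<le> length xs")
  case True
  moreover have "length xs \<le> hi" using w(1,2) gaps by simp
  ultimately show ?thesis using run_cover_left_end[OF w] by blast
next
  case False
  then have "length xs = 0" "lo = 1" using gaps by linarith+
  then have "xs = []" by simp
  have "m \<le> hi"
    using not_closed gaps w(1,4) \<open>xs = []\<close> \<open>lo = 1\<close> by (cases ys) auto
  moreover have "w = replicate m True @ ys" using w(1) \<open>xs = []\<close> by simp
  ultimately show ?thesis
    using leading_run_cover_right_end[OF _ w(2,4)] \<open>lo = 1\<close> w(2) \<open>xs = []\<close>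
    by (intro exI[of _ m]) simp
qed

lemma run_optimal_cover:
  assumes w: "w = xs @ replicate m True @ ys" "1 \<le> m" "ends_False xs" "starts_False ys"
    and parity: "m mod 3 = 2 \<or> even (word_pot 0 w)"
    and gaps: "lo \<le> 1" "length w \<le> hi + 1"
    and not_closed: "\<not> (lo = 1 \<and> hi + 1 = length w \<and> (\<forall>x\<in>set w. x))"
  shows "\<exists>g. lo \<le> g \<and> g \<le> hi \<and> hits g w
    \<and> optimal_drop dmin (word_pot 0 w) (word_pot 0 (cover g w))"
proof -
  define c where "c = word_pot 0 xs + word_pot 0 ys"
  have pot_w: "word_pot 0 w = c + run_pot m"
    using word_pot_run[OF w(3,4)] w(1) by (simp add: c_def)
  consider "optimal_drop dmin (word_pot 0 w) (c + run_pot (m - 1))"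
    | "2 \<le> m" "optimal_drop dmin (word_pot 0 w) (c + run_pot (m - 2))"
    using run_pot_optimal_shrink[OF w(2), of c dmin] parity pot_w by auto
  then show ?thesis
  proof cases
    case 1
    obtain g where g: "lo \<le> g" "g \<le> hi" "hits g w"
      "word_pot 0 (cover g w) = word_pot 0 xs + run_pot (m - 1) + word_pot 0 ys"
      using run_cover_shrink_one[OF w gaps not_closed] by blast
    then have "word_pot 0 (cover g w) = c + run_pot (m - 1)" by (simp add: c_def)
    then show ?thesis using 1 g(1-3) by metis
  next
    case 2
    let ?g = "Suc (length xs)"
    have g: "hits ?g w" "?g < length w"
      "word_pot 0 (cover ?g w) = word_pot 0 xs + run_pot (m - 2) + word_pot 0 ys"
      using run_cover_shrink_two[OF w(1) 2(1) w(4)] by blast+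
    then have "word_pot 0 (cover ?g w) = c + run_pot (m - 2)" by (simp add: c_def)
    moreover have "lo \<le> ?g" "?g \<le> hi" using g(2) gaps by linarith+
    ultimately show ?thesis using 2(2) g(1) by metis
  qed
qed

lemma open_word_optimal_cover:
  assumes "\<exists>x\<in>set w. x"
    and gaps: "lo \<le> 1" "length w \<le> hi + 1"
    and not_closed: "\<not> (lo = 1 \<and> hi + 1 = length w \<and> (\<forall>x\<in>set w. x))"
  shows "\<exists>g. lo \<le> g \<and> g \<le> hi \<and> hits g w
    \<and> optimal_drop dmin (word_pot 0 w) (word_pot 0 (cover g w))"
proof (cases "even (word_pot 0 w)")
  case True
  obtain xs m ys where run: "w = xs @ replicate m True @ ys" "1 \<le> m" "ends_False xs" "starts_False ys"
    using maximal_run_exists[OF assms(1)] by blast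
  show ?thesis using run_optimal_cover[OF run disjI2[OF True] gaps not_closed] .
next
  case False
  then obtain xs m ys where
    run: "w = xs @ replicate m True @ ys" "m mod 3 = 2" "ends_False xs" "starts_False ys"
    by (rule odd_word_pot_run_mod3)
  from run(2) have "1 \<le> m" by presburger
  show ?thesis
    using run_optimal_cover[OF run(1) \<open>1 \<le> m\<close> run(3,4) disjI1[OF run(2)] gaps not_closed] .
qed

lemma seg_pot_optimal_cover:
  assumes gaps: "lo \<le> 1" "length w \<le> hi + 1" "lo = 0 \<or> 1 \<le> hi"
    and "\<exists>x\<in>set w. x"
  shows "\<exists>g. lo \<le> g \<and> g \<le> hi \<and> hits g w
    \<and> optimal_drop dmin (seg_pot lo hi w) (seg_pot lo hi (cover g w))"
proof (cases "lo = 1 \<and> hi + 1 = length w \<and> (\<forall>x\<in>set w. x)")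
  case True
  define L where "L = length w"
  have w: "w = replicate L True" using True replicate_length_same[of w True] by (auto simp: L_def)
  have "2 \<le> L" using True gaps(3) by (simp add: L_def)
  then obtain g where g: "1 \<le> g" "g < L"
    "closed_run_pot L = run_pot (g - 1) + run_pot (L - 1 - g) + 2"
    by (rule closed_run_optimal_gap)
  have "seg_pot lo hi w = closed_run_pot L"
    unfolding seg_pot_def L_def by (rule if_P[OF True])
  moreover have "even (closed_run_pot L)" by (simp add: closed_run_pot_def)
  moreover have hits: "hits g w" using g w by (simp add: hits_def)
  moreover have "seg_pot lo hi (cover g w) = run_pot (g - 1) + run_pot (L - 1 - g)"
    using seg_pot_cover[OF hits] word_pot_cover_replicate[OF g(1,2)] w by simp
  moreover have "lo \<le> g" "g \<le> hi" using True g L_def by simp_all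
  ultimately show ?thesis
    using g(3) by (intro exI[of _ g]) (simp add: optimal_drop_def)
next
  case False
  then have "seg_pot lo hi w = word_pot 0 w" unfolding seg_pot_def by (rule if_not_P)
  moreover obtain g where "lo \<le> g \<and> g \<le> hi \<and> hits g w"
    "optimal_drop dmin (word_pot 0 w) (word_pot 0 (cover g w))"
    using open_word_optimal_cover[OF assms(4) gaps(1,2) False] by blast
  ultimately show ?thesis using seg_pot_cover by metis
qed

section \<open>The game on a path\<close>

text \<open>Vertex 2k + 1 acts on gap k + 1 of the even word, vertex 2k on gap k of the odd word.\<close>

definition even_word :: "nat \<Rightarrow> nat set \<Rightarrow> bool list" where
  "even_word n D = map (\<lambda>i. 2 * i \<notin> D) [0..<(n + 1) div 2]"

definition odd_word :: "nat \<Rightarrow> nat set \<Rightarrow> bool list" where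
  "odd_word n D = map (\<lambda>i. 2 * i + 1 \<notin> D) [0..<n div 2]"

definition path_pot :: "nat \<Rightarrow> nat set \<Rightarrow> nat" where
  "path_pot n D = seg_pot 1 (n div 2) (even_word n D) + seg_pot 0 ((n - 1) div 2) (odd_word n D)"

abbreviation path_nbh :: "nat \<Rightarrow> nat \<Rightarrow> nat set" where
  "path_nbh n v \<equiv> nbh (path_V n) path_E v"

lemma path_nbh_eq: "path_nbh n v = {u. u < n \<and> (v + 1 = u \<or> u + 1 = v)}"
  by (auto simp: nbh_def path_V_def path_E_def)

lemma legal_path_iff:
  "legal (path_V n) path_E D v \<longleftrightarrow> v < n \<and> (\<exists>u. u < n \<and> (v + 1 = u \<or> u + 1 = v) \<and> u \<notin> D)"
  unfolding legal_def path_nbh_eq by (auto simp: path_V_def)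

lemma length_even_word [simp]: "length (even_word n D) = (n + 1) div 2"
  by (simp add: even_word_def)

lemma length_odd_word [simp]: "length (odd_word n D) = n div 2"
  by (simp add: odd_word_def)

lemma nth_even_word: "i < (n + 1) div 2 \<Longrightarrow> even_word n D ! i = (2 * i \<notin> D)"
  by (simp add: even_word_def)

lemma nth_odd_word: "i < n div 2 \<Longrightarrow> odd_word n D ! i = (2 * i + 1 \<notin> D)"
  by (simp add: odd_word_def)

lemma words_after_odd_move:
  assumes "2 * k + 1 < n"
  shows "even_word n (D \<union> path_nbh n (2 * k + 1)) = cover (k + 1) (even_word n D)"
    and "odd_word n (D \<union> path_nbh n (2 * k + 1)) = odd_word n D"
proof -
  show "even_word n (D \<union> path_nbh n (2 * k + 1)) = cover (k + 1) (even_word n D)"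
  proof (rule nth_equalityI)
    fix i assume "i < length (even_word n (D \<union> path_nbh n (2 * k + 1)))"
    then have i: "i < (n + 1) div 2" by simp
    then have "2 * i < n" by linarith
    then show "even_word n (D \<union> path_nbh n (2 * k + 1)) ! i = cover (k + 1) (even_word n D) ! i"
      using i assms by (auto simp: nth_cover nth_even_word path_nbh_eq)
  qed simp
  show "odd_word n (D \<union> path_nbh n (2 * k + 1)) = odd_word n D"
  proof (rule nth_equalityI)
    fix i assume "i < length (odd_word n (D \<union> path_nbh n (2 * k + 1)))"
    then show "odd_word n (D \<union> path_nbh n (2 * k + 1)) ! i = odd_word n D ! i"
      by (auto simp: nth_odd_word path_nbh_eq) presburger+
  qed simp
qed

lemma words_after_even_move:
  assumes "2 * k < n"
  shows "odd_word n (D \<union> path_nbh n (2 * k)) = cover k (odd_word n D)"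
    and "even_word n (D \<union> path_nbh n (2 * k)) = even_word n D"
proof -
  show "odd_word n (D \<union> path_nbh n (2 * k)) = cover k (odd_word n D)"
  proof (rule nth_equalityI)
    fix i assume "i < length (odd_word n (D \<union> path_nbh n (2 * k)))"
    then have i: "i < n div 2" by simp
    then have "2 * i + 1 < n" by linarith
    then show "odd_word n (D \<union> path_nbh n (2 * k)) ! i = cover k (odd_word n D) ! i"
      using i assms by (auto simp: nth_cover nth_odd_word path_nbh_eq)
  qed simp
  show "even_word n (D \<union> path_nbh n (2 * k)) = even_word n D"
  proof (rule nth_equalityI)
    fix i assume "i < length (even_word n (D \<union> path_nbh n (2 * k)))"
    then show "even_word n (D \<union> path_nbh n (2 * k)) ! i = even_word n D ! i"
      by (auto simp: nth_even_word path_nbh_eq) presburger+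
  qed simp
qed

lemma legal_odd_vertex_iff:
  assumes "2 * k + 1 < n"
  shows "legal (path_V n) path_E D (2 * k + 1) \<longleftrightarrow> hits (k + 1) (even_word n D)"
proof -
  have "2 * k + 1 + 1 = u \<or> u + 1 = 2 * k + 1 \<longleftrightarrow> u = 2 * k + 2 \<or> u = 2 * k" for u
    by auto
  then have "legal (path_V n) path_E D (2 * k + 1)
      \<longleftrightarrow> (2 * k + 2 < n \<and> 2 * k + 2 \<notin> D) \<or> 2 * k \<notin> D"
    using assms unfolding legal_path_iff by (auto intro: exI[of _ "2 * k"])
  also have "\<dots> \<longleftrightarrow> hits (k + 1) (even_word n D)"
  proof -
    have "k < (n + 1) div 2" "k + 1 < (n + 1) div 2 \<longleftrightarrow> 2 * k + 2 < n" using assms by linarith+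
    then show ?thesis by (auto simp: hits_def nth_even_word)
  qed
  finally show ?thesis .
qed

lemma legal_even_vertex_iff:
  assumes "2 * k < n"
  shows "legal (path_V n) path_E D (2 * k) \<longleftrightarrow> hits k (odd_word n D)"
proof -
  have "2 * k + 1 = u \<or> u + 1 = 2 * k \<longleftrightarrow> u = 2 * k + 1 \<or> (0 < k \<and> u = 2 * (k - 1) + 1)" for u
    by auto
  then have "legal (path_V n) path_E D (2 * k)
      \<longleftrightarrow> (2 * k + 1 < n \<and> 2 * k + 1 \<notin> D) \<or> (0 < k \<and> 2 * (k - 1) + 1 \<notin> D)"
    using assms unfolding legal_path_iff by (auto intro: exI[of _ "2 * (k - 1) + 1"])
  also have "\<dots> \<longleftrightarrow> hits k (odd_word n D)"
  proof -
    have "0 < k \<Longrightarrow> k - 1 < n div 2" "k < n div 2 \<longleftrightarrow> 2 * k + 1 < n" using assms by linarith+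
    then show ?thesis by (auto simp: hits_def nth_odd_word)
  qed
  finally show ?thesis .
qed

lemma path_pot_move_bounds:
  assumes "legal (path_V n) path_E D v"
  shows "path_pot n (D \<union> path_nbh n v) < path_pot n D
    \<and> path_pot n D \<le> path_pot n (D \<union> path_nbh n v) + 3"
proof -
  have "v < n" using assms by (simp add: legal_path_iff)
  show ?thesis
  proof (cases "even v")
    case True
    then obtain k where v: "v = 2 * k" by blast
    with \<open>v < n\<close> have "2 * k < n" by simp
    let ?hi = "(n - 1) div 2"
    have "hits k (odd_word n D)" using legal_even_vertex_iff[OF \<open>2 * k < n\<close>] assms v by simp
    then have "seg_pot 0 ?hi (cover k (odd_word n D)) < seg_pot 0 ?hi (odd_word n D)
      \<and> seg_pot 0 ?hi (odd_word n D) \<le> seg_pot 0 ?hi (cover k (odd_word n D)) + 3"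
      using \<open>2 * k < n\<close> by (intro seg_pot_cover_bounds) auto
    then show ?thesis using words_after_even_move[OF \<open>2 * k < n\<close>, of D] v by (simp add: path_pot_def)
  next
    case False
    then obtain k where v: "v = 2 * k + 1" by (metis oddE)
    with \<open>v < n\<close> have "2 * k + 1 < n" by simp
    let ?hi = "n div 2"
    have "hits (k + 1) (even_word n D)" using legal_odd_vertex_iff[OF \<open>2 * k + 1 < n\<close>] assms v by simp
    then have "seg_pot 1 ?hi (cover (k + 1) (even_word n D)) < seg_pot 1 ?hi (even_word n D)
      \<and> seg_pot 1 ?hi (even_word n D) \<le> seg_pot 1 ?hi (cover (k + 1) (even_word n D)) + 3"
      using \<open>2 * k + 1 < n\<close> by (intro seg_pot_cover_bounds) auto
    then show ?thesis using words_after_odd_move[OF \<open>2 * k + 1 < n\<close>, of D] v by (simp add: path_pot_def)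
  qed
qed

lemma even_word_optimal_move:
  assumes "2 \<le> n" "\<exists>x\<in>set (even_word n D). x"
  obtains v where "legal (path_V n) path_E D v" "odd_word n (D \<union> path_nbh n v) = odd_word n D"
    "optimal_drop dmin (seg_pot 1 (n div 2) (even_word n D))
       (seg_pot 1 (n div 2) (even_word n (D \<union> path_nbh n v)))"
proof -
  have "(n + 1) div 2 \<le> n div 2 + 1" "1 \<le> n div 2" using assms(1) by linarith+
  then obtain g where g: "1 \<le> g" "g \<le> n div 2" "hits g (even_word n D)"
    "optimal_drop dmin (seg_pot 1 (n div 2) (even_word n D))
       (seg_pot 1 (n div 2) (cover g (even_word n D)))"
    using seg_pot_optimal_cover[where lo = 1 and w = "even_word n D" and hi = "n div 2" and dmin = dmin]
      assms(2) by auto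
  then obtain k where k: "g = k + 1" by (metis add.commute le_Suc_ex)
  with g(2) have "2 * k + 1 < n" by linarith
  then show ?thesis
    using that[of "2 * k + 1"] g(3,4) k legal_odd_vertex_iff words_after_odd_move by simp
qed

lemma odd_word_optimal_move:
  assumes "\<exists>x\<in>set (odd_word n D). x"
  obtains v where "legal (path_V n) path_E D v" "even_word n (D \<union> path_nbh n v) = even_word n D"
    "optimal_drop dmin (seg_pot 0 ((n - 1) div 2) (odd_word n D))
       (seg_pot 0 ((n - 1) div 2) (odd_word n (D \<union> path_nbh n v)))"
proof -
  obtain g where g: "g \<le> (n - 1) div 2" "hits g (odd_word n D)"
    "optimal_drop dmin (seg_pot 0 ((n - 1) div 2) (odd_word n D))
       (seg_pot 0 ((n - 1) div 2) (cover g (odd_word n D)))"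
    using seg_pot_optimal_cover[where lo = 0 and w = "odd_word n D" and hi = "(n - 1) div 2"
        and dmin = dmin] assms by fastforce
  have "n \<noteq> 0" using g(2) by (auto simp: hits_def)
  with g(1) have "2 * g < n" by linarith
  then show ?thesis
    using that[of "2 * g"] g(2,3) legal_even_vertex_iff words_after_even_move by simp
qed

lemma path_pot_optimal_move:
  assumes "2 \<le> n" "path_pot n D \<noteq> 0"
  shows "\<exists>v. legal (path_V n) path_E D v
    \<and> optimal_drop dmin (path_pot n D) (path_pot n (D \<union> path_nbh n v))"
proof -
  define a where "a = seg_pot 1 (n div 2) (even_word n D)"
  define b where "b = seg_pot 0 ((n - 1) div 2) (odd_word n D)"
  have pot: "path_pot n D = a + b" by (simp add: path_pot_def a_def b_def)
  with assms(2) consider "a \<noteq> 0" "odd a \<or> even (a + b)" | "b \<noteq> 0" "odd b \<or> even (b + a)"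
    by (cases "a = 0"; cases "even a"; cases "even b") auto
  then show ?thesis
  proof cases
    case 1
    then have "\<exists>x\<in>set (even_word n D). x"
      using seg_pot_eq_0_iff[of 1 "n div 2" "even_word n D"] unfolding a_def by auto
    then obtain v where v: "legal (path_V n) path_E D v"
      "odd_word n (D \<union> path_nbh n v) = odd_word n D"
      "optimal_drop dmin a (seg_pot 1 (n div 2) (even_word n (D \<union> path_nbh n v)))"
      unfolding a_def by (rule even_word_optimal_move[OF assms(1)])
    have "path_pot n (D \<union> path_nbh n v) = seg_pot 1 (n div 2) (even_word n (D \<union> path_nbh n v)) + b"
      using v(2) by (simp add: path_pot_def b_def)
    then have "optimal_drop dmin (path_pot n D) (path_pot n (D \<union> path_nbh n v))"
      unfolding pot by (rule ssubst) (rule optimal_drop_add[OF v(3) 1(2)])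
    with v(1) show ?thesis by blast
  next
    case 2
    then have "\<exists>x\<in>set (odd_word n D). x"
      using seg_pot_eq_0_iff[of 0 "(n - 1) div 2" "odd_word n D"] unfolding b_def by auto
    then obtain v where v: "legal (path_V n) path_E D v"
      "even_word n (D \<union> path_nbh n v) = even_word n D"
      "optimal_drop dmin b (seg_pot 0 ((n - 1) div 2) (odd_word n (D \<union> path_nbh n v)))"
      unfolding b_def by (rule odd_word_optimal_move)
    have "path_pot n (D \<union> path_nbh n v) = seg_pot 0 ((n - 1) div 2) (odd_word n (D \<union> path_nbh n v)) + a"
      using v(2) by (simp add: path_pot_def a_def)
    then have "optimal_drop dmin (path_pot n D) (path_pot n (D \<union> path_nbh n v))"
      unfolding pot add.commute[of a b] by (rule ssubst) (rule optimal_drop_add[OF v(3) 2(2)])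
    with v(1) show ?thesis by blast
  qed
qed

lemma gval_path:
  assumes "2 \<le> n" "card ({0..<n} - D) \<le> k"
  shows "gval (path_V n) path_E k dmin D = pot_value dmin (path_pot n D)"
  by (rule gval_eq_pot_value[OF _ path_pot_move_bounds path_pot_optimal_move[OF assms(1)]])
    (use assms(2) in \<open>simp_all add: path_V_def\<close>)

section \<open>Critical paths\<close>

lemma tg_critical_path_iff:
  assumes "2 \<le> n"
  shows "tg_critical (path_V n) path_E \<longleftrightarrow> (\<forall>v<n. path_pot n {v} div 2 < path_pot n {} div 2)"
proof -
  have "gamma_tg (path_V n) path_E = path_pot n {} div 2"
    unfolding gamma_tg_def using gval_path[OF assms, of "{}" "card (path_V n)" True]
    by (simp add: path_V_def pot_value_def)
  moreover have "gamma_tg_decl (path_V n) path_E v = path_pot n {v} div 2" if "v < n" for v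
    unfolding gamma_tg_decl_def using gval_path[OF assms, of "{v}" "card (path_V n)" True] that
    by (simp add: path_V_def pot_value_def)
  ultimately show ?thesis unfolding tg_critical_def by (auto simp: path_V_def)
qed

lemma even_word_empty: "even_word n {} = replicate ((n + 1) div 2) True"
  by (rule nth_equalityI) (simp_all add: nth_even_word)

lemma odd_word_empty: "odd_word n {} = replicate (n div 2) True"
  by (rule nth_equalityI) (simp_all add: nth_odd_word)

lemma even_word_singleton_even:
  assumes "even v" "v < n"
  shows "even_word n {v} = (replicate ((n + 1) div 2) True)[v div 2 := False]"
proof (rule nth_equalityI)
  fix i assume "i < length (even_word n {v})"
  moreover have "2 * i = v \<longleftrightarrow> i = v div 2" using assms(1) by auto
  moreover have "v div 2 < (n + 1) div 2" using assms(2) by linarith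
  ultimately show "even_word n {v} ! i = (replicate ((n + 1) div 2) True)[v div 2 := False] ! i"
    by (simp add: nth_even_word nth_list_update)
qed simp

lemma even_word_singleton_odd:
  assumes "odd v"
  shows "even_word n {v} = replicate ((n + 1) div 2) True"
proof (rule nth_equalityI)
  fix i assume "i < length (even_word n {v})"
  moreover have "2 * i \<noteq> v" using assms by auto
  ultimately show "even_word n {v} ! i = replicate ((n + 1) div 2) True ! i"
    by (simp add: nth_even_word)
qed simp

lemma odd_word_singleton_odd:
  assumes "odd v" "v < n"
  shows "odd_word n {v} = (replicate (n div 2) True)[v div 2 := False]"
proof (rule nth_equalityI)
  fix i assume "i < length (odd_word n {v})"
  moreover have "2 * i + 1 = v \<longleftrightarrow> i = v div 2" using assms(1) by auto
  moreover have "v div 2 < n div 2" using assms by presburger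
  ultimately show "odd_word n {v} ! i = (replicate (n div 2) True)[v div 2 := False] ! i"
    by (simp add: nth_odd_word nth_list_update)
qed simp

lemma odd_word_singleton_even:
  assumes "even v"
  shows "odd_word n {v} = replicate (n div 2) True"
proof (rule nth_equalityI)
  fix i assume "i < length (odd_word n {v})"
  moreover have "2 * i + 1 \<noteq> v" using assms by auto
  ultimately show "odd_word n {v} ! i = replicate (n div 2) True ! i"
    by (simp add: nth_odd_word)
qed simp

lemma seg_pot_replicate:
  "\<not> (lo = 1 \<and> hi + 1 = L) \<Longrightarrow> seg_pot lo hi (replicate L True) = run_pot L"
  unfolding seg_pot_def by auto

lemma seg_pot_replicate_update:
  assumes "i < L"
  shows "seg_pot lo hi ((replicate L True)[i := False]) = run_pot i + run_pot (L - 1 - i)"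
proof -
  have "replicate L True = replicate i True @ True # replicate (L - 1 - i) True"
    using assms by (simp flip: replicate_Suc replicate_add)
  then have w: "(replicate L True)[i := False] = replicate i True @ False # replicate (L - 1 - i) True"
    by (simp add: list_update_append)
  have "word_pot 0 ((replicate L True)[i := False]) = run_pot i + run_pot (L - 1 - i)"
    unfolding w word_pot_append_False by simp
  moreover have "False \<in> set ((replicate L True)[i := False])" unfolding w by simp
  ultimately show ?thesis by (auto simp: seg_pot_def)
qed

lemma path_pot_even_length:
  shows "path_pot (2 * m) {} = 2 * run_pot m"
    and "v < 2 * m \<Longrightarrow> path_pot (2 * m) {v} = run_pot m + run_pot (v div 2) + run_pot (m - 1 - v div 2)"
proof -
  show "path_pot (2 * m) {} = 2 * run_pot m"
    by (simp add: path_pot_def even_word_empty odd_word_empty seg_pot_replicate)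
  assume "v < 2 * m"
  then have "v div 2 < m" by linarith
  then have bounds: "v div 2 < (2 * m + 1) div 2" "v div 2 < 2 * m div 2" by simp_all
  show "path_pot (2 * m) {v} = run_pot m + run_pot (v div 2) + run_pot (m - 1 - v div 2)"
  proof (cases "even v")
    case True
    then show ?thesis
      unfolding path_pot_def even_word_singleton_even[OF True \<open>v < 2 * m\<close>]
        odd_word_singleton_even[OF True] seg_pot_replicate_update[OF bounds(1)]
      by (simp add: seg_pot_replicate)
  next
    case False
    then show ?thesis
      unfolding path_pot_def even_word_singleton_odd[OF False]
        odd_word_singleton_odd[OF False \<open>v < 2 * m\<close>] seg_pot_replicate_update[OF bounds(2)]
      by (simp add: seg_pot_replicate)
  qed
qed

lemma path_pot_odd_length:
  shows "path_pot (2 * m + 1) {} = closed_run_pot (m + 1) + run_pot m"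
    and "even v \<Longrightarrow> v < 2 * m + 1 \<Longrightarrow>
      path_pot (2 * m + 1) {v} = run_pot (v div 2) + run_pot (m - v div 2) + run_pot m"
    and "odd v \<Longrightarrow> v < 2 * m + 1 \<Longrightarrow>
      path_pot (2 * m + 1) {v} = closed_run_pot (m + 1) + run_pot (v div 2) + run_pot (m - 1 - v div 2)"
proof -
  have closed: "seg_pot 1 m (replicate (m + 1) True) = closed_run_pot (m + 1)"
    by (simp add: seg_pot_def)
  show "path_pot (2 * m + 1) {} = closed_run_pot (m + 1) + run_pot m"
    using closed by (simp add: path_pot_def even_word_empty odd_word_empty seg_pot_replicate)
  show "path_pot (2 * m + 1) {v} = run_pot (v div 2) + run_pot (m - v div 2) + run_pot m"
    if "even v" "v < 2 * m + 1"
  proof -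
    have "v div 2 < (2 * m + 1 + 1) div 2" using that by linarith
    then show ?thesis
      unfolding path_pot_def even_word_singleton_even[OF that] odd_word_singleton_even[OF that(1)]
        seg_pot_replicate_update[OF \<open>v div 2 < (2 * m + 1 + 1) div 2\<close>]
      by (simp add: seg_pot_replicate)
  qed
  show "path_pot (2 * m + 1) {v} = closed_run_pot (m + 1) + run_pot (v div 2) + run_pot (m - 1 - v div 2)"
    if "odd v" "v < 2 * m + 1"
  proof -
    have "v div 2 < (2 * m + 1) div 2" using that by presburger
    then show ?thesis
      unfolding path_pot_def even_word_singleton_odd[OF that(1)] odd_word_singleton_odd[OF that]
        seg_pot_replicate_update[OF \<open>v div 2 < (2 * m + 1) div 2\<close>]
      using closed by simp
  qed
qed

lemma run_pot_gt_iff: "4 * m < 3 * run_pot m \<longleftrightarrow> m mod 3 \<noteq> 0"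
proof (cases m rule: nat_mod3_cases)
  case (1 q)
  then show ?thesis using run_pot_mod3(1)[of q] by simp
next
  case (2 q)
  moreover have "run_pot m = 4 * q + 2" using run_pot_mod3(2)[of q] 2 by simp
  moreover have "m mod 3 = 1" using 2 by presburger
  ultimately show ?thesis by simp
next
  case (3 q)
  moreover have "run_pot m = 4 * q + 3" using run_pot_mod3(3)[of q] 3 by simp
  moreover have "m mod 3 = 2" using 3 by presburger
  ultimately show ?thesis by simp
qed

lemma run_pot_split_less_iff:
  assumes "1 \<le> m"
  shows "(\<forall>i<m. run_pot i + run_pot (m - 1 - i) < run_pot m) \<longleftrightarrow> m mod 3 \<noteq> 0"
proof
  assume all: "\<forall>i<m. run_pot i + run_pot (m - 1 - i) < run_pot m"
  show "m mod 3 \<noteq> 0"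
  proof
    assume "m mod 3 = 0"
    then have "3 dvd m" by (simp add: mod_eq_0_iff_dvd)
    then obtain q where q: "m = 3 * q" by (rule dvdE)
    with assms obtain p where p: "q = Suc p" by (cases q) auto
    have "run_pot m = 4 * p + 4" using run_pot_mod3(1)[of q] q p by simp
    moreover have "run_pot (m - 1 - 1) = 4 * p + 2" using run_pot_mod3(2)[of p] q p by simp
    moreover have "run_pot 1 = 2" by (simp add: run_pot_def)
    ultimately have "run_pot 1 + run_pot (m - 1 - 1) = run_pot m" by simp
    moreover have "1 < m" using q p by simp
    ultimately show False using all by fastforce
  qed
next
  assume "m mod 3 \<noteq> 0"
  then have "4 * m < 3 * run_pot m" by (simp add: run_pot_gt_iff)
  show "\<forall>i<m. run_pot i + run_pot (m - 1 - i) < run_pot m"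
  proof (intro allI impI)
    fix i assume "i < m"
    then have "i + (m - 1 - i) + 1 = m" by simp
    then show "run_pot i + run_pot (m - 1 - i) < run_pot m"
      using run_pot_bounds(2)[of i] run_pot_bounds(2)[of "m - 1 - i"] \<open>4 * m < 3 * run_pot m\<close>
      by linarith
  qed
qed

lemma closed_run_pot_Suc_le:
  assumes "m mod 3 \<noteq> 0"
  shows "closed_run_pot (m + 1) \<le> run_pot m + 1"
proof (cases m rule: nat_mod3_cases)
  case (1 q)
  then show ?thesis using assms by simp
next
  case (2 q)
  then show ?thesis using closed_run_pot_mod3(3)[of q] run_pot_mod3(2)[of q] by simp
next
  case (3 q)
  then have "closed_run_pot (m + 1) = 4 * q + 4"
    unfolding closed_run_pot_def by presburger
  then show ?thesis using run_pot_mod3(3)[of q] 3 by simp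
qed

lemma even_path_critical_iff:
  assumes "1 \<le> m"
  shows "tg_critical (path_V (2 * m)) path_E \<longleftrightarrow> m mod 3 \<noteq> 0"
proof -
  have "path_pot (2 * m) {v} div 2 < path_pot (2 * m) {} div 2
      \<longleftrightarrow> run_pot (v div 2) + run_pot (m - 1 - v div 2) < run_pot m" if "v < 2 * m" for v
    using path_pot_even_length(1)[of m] path_pot_even_length(2)[OF that] by simp linarith
  then have "tg_critical (path_V (2 * m)) path_E
      \<longleftrightarrow> (\<forall>v<2 * m. run_pot (v div 2) + run_pot (m - 1 - v div 2) < run_pot m)"
    using tg_critical_path_iff[of "2 * m"] assms by simp
  also have "\<dots> \<longleftrightarrow> (\<forall>i<m. run_pot i + run_pot (m - 1 - i) < run_pot m)"
  proof
    assume all: "\<forall>v<2 * m. run_pot (v div 2) + run_pot (m - 1 - v div 2) < run_pot m"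
    show "\<forall>i<m. run_pot i + run_pot (m - 1 - i) < run_pot m"
    proof (intro allI impI)
      fix i assume "i < m"
      then show "run_pot i + run_pot (m - 1 - i) < run_pot m" using all[rule_format, of "2 * i"] by simp
    qed
  qed auto
  finally show ?thesis using run_pot_split_less_iff[OF assms] by simp
qed

lemma odd_path_not_critical:
  assumes "1 \<le> m"
  shows "\<not> tg_critical (path_V (2 * m + 1)) path_E"
proof -
  have "\<exists>v<2 * m + 1. \<not> path_pot (2 * m + 1) {v} div 2 < path_pot (2 * m + 1) {} div 2"
  proof (cases "m mod 3 = 0")
    case True
    then have "3 dvd m" by (simp add: mod_eq_0_iff_dvd)
    then obtain q where q: "m = 3 * q" by (rule dvdE)
    with assms obtain p where p: "q = Suc p" by (cases q) auto
    have "run_pot m = 4 * p + 4" using run_pot_mod3(1)[of q] q p by simp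
    moreover have "run_pot (m - 1 - 3 div 2) = 4 * p + 2" using run_pot_mod3(2)[of p] q p by simp
    moreover have "run_pot (3 div 2) = 2" by (simp add: run_pot_def)
    ultimately have "path_pot (2 * m + 1) {3} = path_pot (2 * m + 1) {}"
      using path_pot_odd_length(1)[of m] path_pot_odd_length(3)[of 3 m] q p by simp
    moreover have "3 < 2 * m + 1" using q p by simp
    ultimately show ?thesis by (metis order_less_irrefl)
  next
    case False
    have "path_pot (2 * m + 1) {0} = 2 * run_pot m"
      using path_pot_odd_length(2)[of 0 m] by simp
    moreover have "path_pot (2 * m + 1) {} \<le> 2 * run_pot m + 1"
      using path_pot_odd_length(1)[of m] closed_run_pot_Suc_le[OF False] by simp
    ultimately show ?thesis by (intro exI[of _ 0]) auto
  qed
  then show ?thesis using tg_critical_path_iff[of "2 * m + 1"] assms by auto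
qed

theorem theorem3p1:
  fixes n :: nat
  assumes "n \<ge> 2"
  shows "tg_critical (path_V n) path_E \<longleftrightarrow> n mod 6 \<in> {2, 4}"
proof (cases "even n")
  case True
  then obtain m where n: "n = 2 * m" by blast
  with assms have "1 \<le> m" by simp
  have "n mod 6 \<in> {2, 4} \<longleftrightarrow> m mod 3 \<noteq> 0" unfolding n by auto presburger+
  then show ?thesis using even_path_critical_iff[OF \<open>1 \<le> m\<close>] n by simp
next
  case False
  then obtain m where n: "n = 2 * m + 1" by (metis oddE)
  with assms have "1 \<le> m" by simp
  have "n mod 6 \<notin> {2, 4}" using False by auto presburger+
  then show ?thesis using odd_path_not_critical[OF \<open>1 \<le> m\<close>] n by simp
qed

end
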